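(* For every $n$-qubit pure state $\ket\psi$, the support of $p_\psi$ is contained in $\mathrm{Weyl}(\ket\psi)^\perp$.
   Context: For $x=(a,b)\in\mathbb F_2^{2n}$, $W_x = i^{a\cdot b}X^{a_1}Z^{b_1}\otimes\cdots\otimes X^{a_n}Z^{b_n}$ ($a\cdot b$ over the integers); $p_\psi(x)=2^{-n}\braket{\psi|W_x|\psi}^2$; $\mathrm{Weyl}(\ket\psi)=\{x:W_x\ket\psi=\pm\ket\psi\}$ (a subspace). The symplectic product is $[x,y]=\sum_{j=1}^n(x_jy_{n+j}+x_{n+j}y_j)\bmod 2$, and $T^\perp=\{a:[x,a]=0\ \forall x\in T\}$. *)

theory Defs
  imports Complex_Main
begin

text \<open>An n-qubit state is a function psi :: nat => complex whose relevant
 entries are psi k for computational basis indices k < 2^n; qubit j (0 <= j < n) corresponds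
 to bit j of k. A point x of F_2^{2n} is a function nat => bool vanishing at indices >= 2n;
 x = (a,b) with a_j = x j and b_j = x (n+j) for j < n (True means 1).\<close>

definition F2vecs :: "nat \<Rightarrow> (nat \<Rightarrow> bool) set" where
  "F2vecs n = {x. \<forall>j\<ge>2*n. \<not> x j}"

definition adotb :: "nat \<Rightarrow> (nat \<Rightarrow> bool) \<Rightarrow> nat" where
  "adotb n x = card {j. j < n \<and> x j \<and> x (n+j)}"

text \<open>Matrix entry (r,c) of W_x = i^{a.b} X^{a_1}Z^{b_1} (x) ... (x) X^{a_n}Z^{b_n}:
  X^a Z^b |c> = (-1)^{b.c} |c xor a>.\<close>
definition Weyl_op :: "nat \<Rightarrow> (nat \<Rightarrow> bool) \<Rightarrow> nat \<Rightarrow> nat \<Rightarrow> complex" where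
  "Weyl_op n x r c =
     (if (\<forall>j<n. bit r j = (bit c j \<noteq> x j))
      then \<i> ^ adotb n x * (-1) ^ card {j. j < n \<and> x (n+j) \<and> bit c j}
      else 0)"

definition Weyl_apply :: "nat \<Rightarrow> (nat \<Rightarrow> bool) \<Rightarrow> (nat \<Rightarrow> complex) \<Rightarrow> nat \<Rightarrow> complex" where
  "Weyl_apply n x psi r = (\<Sum>c<2^n. Weyl_op n x r c * psi c)"

definition pure_state :: "nat \<Rightarrow> (nat \<Rightarrow> complex) \<Rightarrow> bool" where
  "pure_state n psi \<longleftrightarrow> (\<Sum>k<2^n. (cmod (psi k))^2) = 1"

definition expval :: "nat \<Rightarrow> (nat \<Rightarrow> complex) \<Rightarrow> (nat \<Rightarrow> bool) \<Rightarrow> complex" where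
  "expval n psi x = (\<Sum>r<2^n. cnj (psi r) * Weyl_apply n x psi r)"

definition p_psi :: "nat \<Rightarrow> (nat \<Rightarrow> complex) \<Rightarrow> (nat \<Rightarrow> bool) \<Rightarrow> complex" where
  "p_psi n psi x = (expval n psi x)^2 / 2^n"

definition support_p :: "nat \<Rightarrow> (nat \<Rightarrow> complex) \<Rightarrow> (nat \<Rightarrow> bool) set" where
  "support_p n psi = {x \<in> F2vecs n. p_psi n psi x \<noteq> 0}"

definition Weyl_set :: "nat \<Rightarrow> (nat \<Rightarrow> complex) \<Rightarrow> (nat \<Rightarrow> bool) set" where
  "Weyl_set n psi = {x \<in> F2vecs n.
      (\<forall>r<2^n. Weyl_apply n x psi r = psi r) \<or> (\<forall>r<2^n. Weyl_apply n x psi r = - psi r)}"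

definition sympl :: "nat \<Rightarrow> (nat \<Rightarrow> bool) \<Rightarrow> (nat \<Rightarrow> bool) \<Rightarrow> bool" where
  "sympl n x y = odd (card {j. j < n \<and> x j \<and> y (n+j)} + card {j. j < n \<and> x (n+j) \<and> y j})"

definition symp_perp :: "nat \<Rightarrow> (nat \<Rightarrow> bool) set \<Rightarrow> (nat \<Rightarrow> bool) set" where
  "symp_perp n T = {a \<in> F2vecs n. \<forall>x\<in>T. \<not> sympl n x a}"

end

theory Submission
  imports Defs
begin

text \<open>If \<open>W\<^sub>y \<psi> = \<plusminus>\<psi>\<close> and \<open>[x,y] = 1\<close>, then \<open>W\<^sub>y\<close> is unitary and anticommutes with \<open>W\<^sub>x\<close>, so
  \<open>\<langle>\<psi>|W\<^sub>x|\<psi>\<rangle> = \<langle>W\<^sub>y\<psi>|W\<^sub>y W\<^sub>x|\<psi>\<rangle> = -\<langle>W\<^sub>y\<psi>|W\<^sub>x W\<^sub>y|\<psi>\<rangle> = -\<langle>\<psi>|W\<^sub>x|\<psi>\<rangle>\<close>,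
  hence \<open>p\<^sub>\<psi>(x) = 0\<close>. Both facts are read off the matrix of \<open>W\<^sub>x\<close>, a signed permutation:
  it sends \<open>|c\<rangle>\<close> to \<open>i\<^bsup>a\<cdot>b\<^esup> (-1)\<^bsup>b\<cdot>c\<^esup> |c \<oplus> a\<rangle>\<close>.\<close>

definition nat_of_bits :: "nat \<Rightarrow> (nat \<Rightarrow> bool) \<Rightarrow> nat" where
  "nat_of_bits n x = horner_sum of_bool 2 (map x [0..<n])"

lemma bit_nat_of_bits: "bit (nat_of_bits n x) j \<longleftrightarrow> j < n \<and> x j"
  by (auto simp: nat_of_bits_def bit_horner_sum_bit_iff)

lemma nat_of_bits_less: "nat_of_bits n x < 2 ^ n"
  using horner_sum_of_bool_2_less [of "map x [0..<n]"] by (simp add: nat_of_bits_def)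

lemma not_bit_if_less_power2: "(c::nat) < 2 ^ n \<Longrightarrow> n \<le> j \<Longrightarrow> \<not> bit c j"
  by (metis bit_take_bit_iff leD take_bit_nat_eq_self)

lemma xor_less_power2: "(r::nat) < 2 ^ n \<Longrightarrow> c < 2 ^ n \<Longrightarrow> xor r c < 2 ^ n"
  by (metis take_bit_nat_eq_self_iff take_bit_xor)

lemma sum_xor_reindex:
  assumes "(k::nat) < 2 ^ n"
  shows "(\<Sum>r<2 ^ n. f (xor r k)) = (\<Sum>r<2 ^ n. f r)"
  by (rule sum.reindex_bij_witness [where i = "\<lambda>r. xor r k" and j = "\<lambda>r. xor r k"])
     (auto simp: xor.assoc xor_less_power2 assms)

definition Z_sign :: "nat \<Rightarrow> (nat \<Rightarrow> bool) \<Rightarrow> nat \<Rightarrow> complex" where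
  "Z_sign n x c = (-1) ^ card {j. j < n \<and> x (n + j) \<and> bit c j}"

lemma Z_sign_eq_prod: "Z_sign n x c = (\<Prod>j<n. if x (n + j) \<and> bit c j then -1 else 1)"
proof -
  have "{..<n} \<inter> {j. x (n + j) \<and> bit c j} = {j. j < n \<and> x (n + j) \<and> bit c j}" by auto
  then show ?thesis by (simp add: Z_sign_def prod.If_cases)
qed

lemma Z_sign_xor: "Z_sign n x (xor c k) = Z_sign n x c * Z_sign n x k"
  unfolding Z_sign_eq_prod prod.distrib [symmetric]
  by (rule prod.cong) (auto simp: bit_xor_iff)

lemma Z_sign_square: "Z_sign n x c * Z_sign n x c = 1"
  by (simp add: Z_sign_def flip: power_add)

lemma norm_Z_sign: "cmod (Z_sign n x c) = 1"
  by (simp add: Z_sign_def norm_power)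

lemma Z_sign_nat_of_bits: "Z_sign n x (nat_of_bits n y) = (-1) ^ card {j. j < n \<and> x (n + j) \<and> y j}"
proof -
  have "{j. j < n \<and> x (n + j) \<and> bit (nat_of_bits n y) j} = {j. j < n \<and> x (n + j) \<and> y j}"
    by (auto simp: bit_nat_of_bits)
  then show ?thesis by (simp add: Z_sign_def)
qed

lemma Z_sign_symplectic:
  "Z_sign n x (nat_of_bits n y) * Z_sign n y (nat_of_bits n x) = (if sympl n x y then -1 else 1)"
proof -
  have "{j. j < n \<and> y (n + j) \<and> x j} = {j. j < n \<and> x j \<and> y (n + j)}" by auto
  then show ?thesis
    by (simp add: Z_sign_nat_of_bits sympl_def add.commute flip: power_add)
qed

lemma xor_eq_iff_bits:
  assumes "r < 2 ^ n" and "c < 2 ^ n"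
  shows "(\<forall>j<n. bit r j = (bit c j \<noteq> x j)) \<longleftrightarrow> c = xor r (nat_of_bits n x)"
proof
  assume bits: "\<forall>j<n. bit r j = (bit c j \<noteq> x j)"
  show "c = xor r (nat_of_bits n x)"
  proof (rule bit_eqI)
    fix j
    show "bit c j \<longleftrightarrow> bit (xor r (nat_of_bits n x)) j"
    proof (cases "j < n")
      case True
      with bits show ?thesis by (auto simp: bit_xor_iff bit_nat_of_bits)
    next
      case False
      then have "n \<le> j" by simp
      then show ?thesis
        using not_bit_if_less_power2 [OF assms(2)]
          not_bit_if_less_power2 [OF xor_less_power2 [OF assms(1) nat_of_bits_less]]
        by simp
    qed
  qed
qed (auto simp: bit_xor_iff bit_nat_of_bits)

lemma Weyl_op_eq:
  assumes "r < 2 ^ n" and "c < 2 ^ n"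
  shows "Weyl_op n x r c =
    (if c = xor r (nat_of_bits n x) then \<i> ^ adotb n x * Z_sign n x c else 0)"
  unfolding Weyl_op_def xor_eq_iff_bits [OF assms] Z_sign_def by simp

lemma Weyl_apply_eq:
  assumes "r < 2 ^ n"
  shows "Weyl_apply n x \<phi> r =
    \<i> ^ adotb n x * Z_sign n x (xor r (nat_of_bits n x)) * \<phi> (xor r (nat_of_bits n x))"
    (is "_ = ?f (xor r (nat_of_bits n x))")
proof -
  have "Weyl_apply n x \<phi> r = (\<Sum>c<2 ^ n. if c = xor r (nat_of_bits n x) then ?f c else 0)"
    unfolding Weyl_apply_def by (rule sum.cong) (simp_all add: Weyl_op_eq assms)
  then show ?thesis
    using xor_less_power2 [OF assms nat_of_bits_less] by simp
qed

lemma Weyl_apply_cong: "\<forall>c<2 ^ n. \<phi> c = \<chi> c \<Longrightarrow> Weyl_apply n x \<phi> = Weyl_apply n x \<chi>"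
  by (auto simp: Weyl_apply_def intro!: sum.cong)

lemma Weyl_apply_scale: "Weyl_apply n x (\<lambda>c. s * \<phi> c) r = s * Weyl_apply n x \<phi> r"
  by (simp add: Weyl_apply_def sum_distrib_left mult_ac)

lemma Weyl_apply_commute:
  assumes "r < 2 ^ n"
  shows "Weyl_apply n x (Weyl_apply n y \<phi>) r =
    (if sympl n x y then -1 else 1) * Weyl_apply n y (Weyl_apply n x \<phi>) r"
proof -
  let ?a = "nat_of_bits n x" and ?b = "nat_of_bits n y"
  let ?K = "\<i> ^ adotb n x * \<i> ^ adotb n y * Z_sign n x r * Z_sign n x ?a *
    Z_sign n y r * Z_sign n y ?b * \<phi> (xor r (xor ?a ?b))"
  have ra: "xor r ?a < 2 ^ n" and rb: "xor r ?b < 2 ^ n"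
    using assms by (simp_all add: xor_less_power2 nat_of_bits_less)
  have "Weyl_apply n x (Weyl_apply n y \<phi>) r = Z_sign n y ?a * ?K"
    using assms ra by (simp add: Weyl_apply_eq Z_sign_xor xor.assoc mult_ac)
  moreover have "Weyl_apply n y (Weyl_apply n x \<phi>) r = Z_sign n x ?b * ?K"
    using assms rb by (simp add: Weyl_apply_eq Z_sign_xor xor.assoc xor.commute [of ?b] mult_ac)
  moreover have "Z_sign n y ?a * ?K = (Z_sign n x ?b * Z_sign n y ?a) * (Z_sign n x ?b * ?K)"
    using Z_sign_square [of n x ?b] by (simp add: algebra_simps)
  ultimately show ?thesis
    by (simp add: Z_sign_symplectic)
qed

definition braket :: "nat \<Rightarrow> (nat \<Rightarrow> complex) \<Rightarrow> (nat \<Rightarrow> complex) \<Rightarrow> complex" where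
  "braket n \<phi> \<chi> = (\<Sum>r<2 ^ n. cnj (\<phi> r) * \<chi> r)"

lemma braket_cong:
  "\<forall>r<2 ^ n. \<phi> r = \<phi>' r \<Longrightarrow> \<forall>r<2 ^ n. \<chi> r = \<chi>' r \<Longrightarrow> braket n \<phi> \<chi> = braket n \<phi>' \<chi>'"
  by (simp add: braket_def)

lemma braket_mult_unimodular:
  assumes "\<forall>r<2 ^ n. cmod (u r) = 1"
  shows "braket n (\<lambda>r. u r * \<phi> r) (\<lambda>r. u r * \<chi> r) = braket n \<phi> \<chi>"
proof -
  have "cnj (u r) * u r = 1" if "r < 2 ^ n" for r
    using complex_norm_square [of "u r"] assms that by (simp add: mult.commute)
  then show ?thesis
    unfolding braket_def by (intro sum.cong) (simp_all add: algebra_simps)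
qed

lemma braket_Weyl_apply: "braket n (Weyl_apply n x \<phi>) (Weyl_apply n x \<chi>) = braket n \<phi> \<chi>"
proof -
  let ?a = "nat_of_bits n x"
  let ?u = "\<lambda>r. \<i> ^ adotb n x * Z_sign n x (xor r ?a)"
  have "braket n (Weyl_apply n x \<phi>) (Weyl_apply n x \<chi>) =
      braket n (\<lambda>r. ?u r * \<phi> (xor r ?a)) (\<lambda>r. ?u r * \<chi> (xor r ?a))"
    by (rule braket_cong) (simp_all add: Weyl_apply_eq)
  also have "\<dots> = braket n (\<lambda>r. \<phi> (xor r ?a)) (\<lambda>r. \<chi> (xor r ?a))"
    by (rule braket_mult_unimodular) (simp add: norm_mult norm_power norm_Z_sign)
  also have "\<dots> = braket n \<phi> \<chi>"
    unfolding braket_def by (rule sum_xor_reindex [OF nat_of_bits_less])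
  finally show ?thesis .
qed

lemma expval_eq_0_if_anticommuting_eigenvector:
  assumes eigen: "\<forall>r<2 ^ n. Weyl_apply n y \<psi> r = s * \<psi> r"
    and "cmod s = 1" and "sympl n y x"
  shows "expval n \<psi> x = 0"
proof -
  let ?W = "Weyl_apply n"
  have "expval n \<psi> x = braket n \<psi> (?W x \<psi>)"
    by (simp add: expval_def braket_def)
  also have "\<dots> = braket n (?W y \<psi>) (?W y (?W x \<psi>))"
    by (rule braket_Weyl_apply [symmetric])
  also have "\<dots> = - braket n (?W y \<psi>) (?W x (?W y \<psi>))"
    unfolding braket_def sum_negf [symmetric]
    using Weyl_apply_commute [of _ n y x \<psi>] \<open>sympl n y x\<close> by (intro sum.cong) simp_all
  also have "\<dots> = - braket n (\<lambda>r. s * \<psi> r) (\<lambda>r. s * ?W x \<psi> r)"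
    using eigen by (intro arg_cong [where f = uminus] braket_cong)
      (simp_all add: Weyl_apply_cong [OF eigen] Weyl_apply_scale)
  also have "\<dots> = - braket n \<psi> (?W x \<psi>)"
    using \<open>cmod s = 1\<close> by (simp add: braket_mult_unimodular)
  finally show ?thesis
    by (simp add: expval_def braket_def)
qed

theorem lemma4p3:
  fixes n :: nat and psi :: "nat \<Rightarrow> complex"
  assumes "pure_state n psi"
  shows "support_p n psi \<subseteq> symp_perp n (Weyl_set n psi)"
proof
  fix x assume "x \<in> support_p n psi"
  then have x: "x \<in> F2vecs n" and nonzero: "expval n psi x \<noteq> 0"
    by (auto simp: support_p_def p_psi_def)
  have "\<not> sympl n y x" if "y \<in> Weyl_set n psi" for y
  proof
    assume "sympl n y x"
    from that consider "\<forall>r<2 ^ n. Weyl_apply n y psi r = 1 * psi r"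
      | "\<forall>r<2 ^ n. Weyl_apply n y psi r = (-1) * psi r"
      by (auto simp: Weyl_set_def)
    then have "expval n psi x = 0"
      using expval_eq_0_if_anticommuting_eigenvector [OF _ _ \<open>sympl n y x\<close>]
      by cases (simp_all only: norm_one norm_minus_cancel)
    with nonzero show False ..
  qed
  with x show "x \<in> symp_perp n (Weyl_set n psi)"
    by (simp add: symp_perp_def)
qed

end
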